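(* Let $M$ be a $3$-connected matroid with a $3$-connected minor $N$ where $|E(N)|\ge 4$. If $T$ is an $N$-grounded triangle of $M$ and $x\in T$, then $M/x$ does not have an $N$-minor.
   Context: "Has an $N$-minor" means has a minor isomorphic to $N$. A triangle $T$ of $M$ is $N$-grounded if for all distinct $a,b\in T$, none of $M/a/b$, $M/a\backslash b$, $M\backslash a/b$, $M\backslash a\backslash b$ has an $N$-minor. *)

theory Defs
  imports Main
begin

record 'a matroid =
  ground :: "'a set"
  indep :: "'a set \<Rightarrow> bool"

definition matroid :: "'a matroid \<Rightarrow> bool" where
  "matroid M \<longleftrightarrow>
     finite (ground M) \<and>
     indep M {} \<and>
     (\<forall>X. indep M X \<longrightarrow> X \<subseteq> ground M) \<and>
     (\<forall>X Y. indep M Y \<and> X \<subseteq> Y \<longrightarrow> indep M X) \<and>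
     (\<forall>X Y. indep M X \<and> indep M Y \<and> card X < card Y \<longrightarrow>
        (\<exists>e \<in> Y - X. indep M (insert e X)))"

definition rk :: "'a matroid \<Rightarrow> 'a set \<Rightarrow> nat" where
  "rk M X = Max (card ` {I. I \<subseteq> X \<and> indep M I})"

definition delete :: "'a matroid \<Rightarrow> 'a set \<Rightarrow> 'a matroid" where
  "delete M D = \<lparr> ground = ground M - D,
                  indep = (\<lambda>I. indep M I \<and> I \<inter> D = {}) \<rparr>"

definition contract :: "'a matroid \<Rightarrow> 'a set \<Rightarrow> 'a matroid" where
  "contract M C = \<lparr> ground = ground M - C,
                    indep = (\<lambda>I. I \<subseteq> ground M - C \<and>
                                 rk M (I \<union> (C \<inter> ground M)) = card I + rk M (C \<inter> ground M)) \<rparr>"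

definition is_minor :: "'a matroid \<Rightarrow> 'a matroid \<Rightarrow> bool" where
  "is_minor M' M \<longleftrightarrow> (\<exists>C D. C \<subseteq> ground M \<and> D \<subseteq> ground M \<and> C \<inter> D = {} \<and>
                          M' = delete (contract M C) D)"

definition iso :: "'a matroid \<Rightarrow> 'b matroid \<Rightarrow> bool" where
  "iso M N \<longleftrightarrow> (\<exists>f. bij_betw f (ground M) (ground N) \<and>
                   (\<forall>X \<subseteq> ground M. indep M X \<longleftrightarrow> indep N (f ` X)))"

definition has_minor :: "'a matroid \<Rightarrow> 'b matroid \<Rightarrow> bool" where
  "has_minor M N \<longleftrightarrow> (\<exists>M'. is_minor M' M \<and> iso M' N)"

definition circuit :: "'a matroid \<Rightarrow> 'a set \<Rightarrow> bool" where
  "circuit M C \<longleftrightarrow> C \<subseteq> ground M \<and> \<not> indep M C \<and> (\<forall>e \<in> C. indep M (C - {e}))"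

definition triangle :: "'a matroid \<Rightarrow> 'a set \<Rightarrow> bool" where
  "triangle M T \<longleftrightarrow> circuit M T \<and> card T = 3"

definition j_separation :: "'a matroid \<Rightarrow> nat \<Rightarrow> 'a set \<Rightarrow> bool" where
  "j_separation M j X \<longleftrightarrow> X \<subseteq> ground M \<and> card X \<ge> j \<and> card (ground M - X) \<ge> j \<and>
     rk M X + rk M (ground M - X) < rk M (ground M) + j"

definition three_connected :: "'a matroid \<Rightarrow> bool" where
  "three_connected M \<longleftrightarrow> (\<forall>j X. 1 \<le> j \<and> j < 3 \<longrightarrow> \<not> j_separation M j X)"

definition N_grounded :: "'a matroid \<Rightarrow> 'b matroid \<Rightarrow> 'a set \<Rightarrow> bool" where
  "N_grounded M N T \<longleftrightarrow> triangle M T \<and>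
     (\<forall>a \<in> T. \<forall>b \<in> T. a \<noteq> b \<longrightarrow>
        \<not> has_minor (contract (contract M {a}) {b}) N \<and>
        \<not> has_minor (delete (contract M {a}) {b}) N \<and>
        \<not> has_minor (contract (delete M {a}) {b}) N \<and>
        \<not> has_minor (delete (delete M {a}) {b}) N)"

end

theory Submission
  imports Defs
begin

text \<open>Contracting \<open>x\<close> turns the other two elements \<open>a, b\<close> of the triangle into a parallel
  pair, and they stay dependent in every further contraction. Groundedness forbids an
  \<open>N\<close>-minor of \<open>M/x\<close> that contracts or deletes \<open>a\<close> or \<open>b\<close>, so an \<open>N\<close>-minor of \<open>M/x\<close> would
  keep \<open>{a, b}\<close> as a dependent pair. A dependent pair in a matroid with at least four
  elements is a 2-separation, which the 3-connected \<open>N\<close> does not have.\<close>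

lemma ground_delete [simp]: "ground (delete M D) = ground M - D"
  unfolding delete_def by simp

lemma indep_delete [simp]: "indep (delete M D) I \<longleftrightarrow> indep M I \<and> I \<inter> D = {}"
  unfolding delete_def by simp

lemma ground_contract [simp]: "ground (contract M C) = ground M - C"
  unfolding contract_def by simp

lemma indep_contract:
  "indep (contract M C) I \<longleftrightarrow>
     I \<subseteq> ground M - C \<and> rk M (I \<union> (C \<inter> ground M)) = card I + rk M (C \<inter> ground M)"
  unfolding contract_def by simp

lemma matroid_eqI:
  fixes M1 M2 :: "'a matroid"
  assumes "ground M1 = ground M2" "\<And>I. indep M1 I \<longleftrightarrow> indep M2 I"
  shows "M1 = M2"
  using assms by (intro matroid.equality) auto

lemma
  assumes "matroid M"
  shows matroid_finite_ground: "finite (ground M)"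
    and matroid_indep_empty: "indep M {}"
    and matroid_indep_subset_ground: "indep M I \<Longrightarrow> I \<subseteq> ground M"
    and matroid_indep_subset: "indep M Y \<Longrightarrow> X \<subseteq> Y \<Longrightarrow> indep M X"
    and matroid_augment:
      "indep M X \<Longrightarrow> indep M Y \<Longrightarrow> card X < card Y \<Longrightarrow> \<exists>e \<in> Y - X. indep M (insert e X)"
  using assms unfolding matroid_def by blast+

lemma matroid_indep_finite: "matroid M \<Longrightarrow> indep M I \<Longrightarrow> finite I"
  by (meson finite_subset matroid_finite_ground matroid_indep_subset_ground)

text \<open>The two rank facts below need only the first three axioms, so they also apply to
  contractions before these are known to be matroids.\<close>

lemma finite_indep_subsets:
  assumes "finite (ground M)" "\<And>I. indep M I \<Longrightarrow> I \<subseteq> ground M"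
  shows "finite {I. I \<subseteq> X \<and> indep M I}"
proof (rule finite_subset)
  show "{I. I \<subseteq> X \<and> indep M I} \<subseteq> Pow (ground M)" using assms(2) by auto
qed (use assms(1) in simp)

lemma rk_attained:
  assumes "finite (ground M)" "indep M {}" "\<And>I. indep M I \<Longrightarrow> I \<subseteq> ground M"
  obtains I where "I \<subseteq> X" "indep M I" "card I = rk M X"
proof -
  have "finite {I. I \<subseteq> X \<and> indep M I}" using assms(1,3) by (rule finite_indep_subsets)
  then have "rk M X \<in> card ` {I. I \<subseteq> X \<and> indep M I}"
    unfolding rk_def using assms(2) by (intro Max_in finite_imageI) auto
  then obtain I where "I \<subseteq> X" "indep M I" "card I = rk M X" by auto
  then show ?thesis by (rule that)
qed

lemma card_le_rk:
  assumes "finite (ground M)" "\<And>I. indep M I \<Longrightarrow> I \<subseteq> ground M" "I \<subseteq> X" "indep M I"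
  shows "card I \<le> rk M X"
proof -
  have "finite {I. I \<subseteq> X \<and> indep M I}" using assms(1,2) by (rule finite_indep_subsets)
  then show ?thesis unfolding rk_def using assms(3,4) by (intro Max_ge finite_imageI) auto
qed

lemma matroid_rk_attained:
  assumes "matroid M"
  obtains I where "I \<subseteq> X" "indep M I" "card I = rk M X"
  using rk_attained matroid_finite_ground matroid_indep_empty matroid_indep_subset_ground assms
  by metis

lemma matroid_card_le_rk: "matroid M \<Longrightarrow> I \<subseteq> X \<Longrightarrow> indep M I \<Longrightarrow> card I \<le> rk M X"
  using card_le_rk matroid_finite_ground matroid_indep_subset_ground by metis

lemma rk_mono:
  assumes "matroid M" "X \<subseteq> Y"
  shows "rk M X \<le> rk M Y"
proof -
  obtain I where "I \<subseteq> X" "indep M I" "card I = rk M X"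
    using matroid_rk_attained[OF assms(1)] .
  then show ?thesis using matroid_card_le_rk[OF assms(1), of I Y] assms(2) by auto
qed

lemma indep_extend_to_rk:
  assumes "matroid M" "indep M J" "J \<subseteq> Y"
  obtains B where "J \<subseteq> B" "B \<subseteq> Y" "indep M B" "card B = rk M Y"
proof -
  have "\<exists>B. J \<subseteq> B \<and> B \<subseteq> Y \<and> indep M B \<and> card B = rk M Y"
    using assms(2,3)
  proof (induction "rk M Y - card J" arbitrary: J rule: less_induct)
    case less
    have le: "card J \<le> rk M Y" using matroid_card_le_rk[OF assms(1) less.prems(2,1)] .
    show ?case
    proof (cases "card J = rk M Y")
      case True
      then show ?thesis using less.prems by blast
    next
      case False
      obtain I where I: "I \<subseteq> Y" "indep M I" "card I = rk M Y"
        using matroid_rk_attained[OF assms(1)] .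
      have "card J < card I" using False le I(3) by simp
      then obtain e where e: "e \<in> I - J" "indep M (insert e J)"
        using matroid_augment[OF assms(1) less.prems(1) I(2)] by blast
      have "card (insert e J) = Suc (card J)"
        using e(1) matroid_indep_finite[OF assms(1) less.prems(1)] by simp
      then have smaller: "rk M Y - card (insert e J) < rk M Y - card J" using False le by simp
      have "insert e J \<subseteq> Y" using e(1) I(1) less.prems(2) by blast
      then show ?thesis using less.hyps[OF smaller e(2)] by blast
    qed
  qed
  then show ?thesis using that by blast
qed

text \<open>The extension adds nothing from \<open>A\<close>, since an independent set meets \<open>A\<close> in at most
  \<open>rk M A = card J\<close> elements.\<close>

lemma rk_basis_extend:
  assumes "matroid M" "indep M J" "J \<subseteq> A" "card J = rk M A"
  obtains B where "J \<subseteq> B" "B \<subseteq> X \<union> A" "B \<inter> A = J" "indep M B" "card B = rk M (X \<union> A)"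
proof -
  obtain B where B: "J \<subseteq> B" "B \<subseteq> X \<union> A" "indep M B" "card B = rk M (X \<union> A)"
    using indep_extend_to_rk[OF assms(1,2), of "X \<union> A"] assms(3) by blast
  have "indep M (B \<inter> A)" using matroid_indep_subset[OF assms(1) B(3)] by blast
  then have "card (B \<inter> A) \<le> card J" using matroid_card_le_rk[OF assms(1)] assms(4) by auto
  moreover have "finite (B \<inter> A)" using matroid_indep_finite[OF assms(1) B(3)] by simp
  moreover have "J \<subseteq> B \<inter> A" using B(1) assms(3) by blast
  ultimately have "B \<inter> A = J" using card_seteq by blast
  then show ?thesis using that B by blast
qed

lemma contract_rk:
  assumes "matroid M" "X \<subseteq> ground M - A"
  shows "rk (contract M A) X = rk M (X \<union> (A \<inter> ground M)) - rk M (A \<inter> ground M)"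
proof -
  define A' where "A' = A \<inter> ground M"
  have contract_axioms: "finite (ground (contract M A))" "indep (contract M A) {}"
    "\<And>I. indep (contract M A) I \<Longrightarrow> I \<subseteq> ground (contract M A)"
    using matroid_finite_ground[OF assms(1)] by (auto simp: indep_contract)
  have upper: "rk (contract M A) X \<le> rk M (X \<union> A') - rk M A'"
  proof -
    obtain I where I: "I \<subseteq> X" "indep (contract M A) I" "card I = rk (contract M A) X"
      using rk_attained[OF contract_axioms] .
    have "card I + rk M A' = rk M (I \<union> A')" using I(2) by (simp add: indep_contract A'_def)
    also have "\<dots> \<le> rk M (X \<union> A')" using I(1) by (intro rk_mono[OF assms(1)]) blast
    finally show ?thesis using I(3) by simp
  qed
  obtain J where J: "J \<subseteq> A'" "indep M J" "card J = rk M A'"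
    using matroid_rk_attained[OF assms(1)] .
  obtain B where B: "J \<subseteq> B" "B \<subseteq> X \<union> A'" "indep M B" "card B = rk M (X \<union> A')"
    and BA: "B \<inter> A' = J"
    using rk_basis_extend[OF assms(1) J(2,1,3)] by blast
  define I where "I = B - J"
  have I_sub: "I \<subseteq> X" using B(2) BA unfolding I_def by auto
  have card_B: "card B = card I + card J"
    unfolding I_def using matroid_indep_finite[OF assms(1) B(3)] B(1)
    by (metis card_Diff_subset card_mono finite_subset le_add_diff_inverse2)
  have "B \<subseteq> I \<union> A'" using BA unfolding I_def by blast
  then have "card B \<le> rk M (I \<union> A')" using matroid_card_le_rk[OF assms(1) _ B(3)] by blast
  moreover have "rk M (I \<union> A') \<le> rk M (X \<union> A')" using I_sub by (intro rk_mono[OF assms(1)]) blast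
  ultimately have "indep (contract M A) I"
    using I_sub assms(2) B(4) card_B J(3) by (simp add: indep_contract A'_def)
  then have "card I \<le> rk (contract M A) X" using card_le_rk[OF contract_axioms(1,3) I_sub] by blast
  then show ?thesis using upper card_B B(4) J(3) A'_def by simp
qed

lemma contract_contract:
  assumes "matroid M"
  shows "contract (contract M A) B = contract M (A \<union> B)"
proof (rule matroid_eqI)
  show "ground (contract (contract M A) B) = ground (contract M (A \<union> B))" by auto
  fix I
  show "indep (contract (contract M A) B) I \<longleftrightarrow> indep (contract M (A \<union> B)) I"
  proof (cases "I \<subseteq> ground M - A - B")
    case False
    then show ?thesis by (auto simp: indep_contract)
  next
    case True
    define A' where "A' = A \<inter> ground M"
    define B' where "B' = B \<inter> (ground M - A)"
    have rk_IB: "rk (contract M A) (I \<union> B') = rk M (I \<union> B' \<union> A') - rk M A'"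
      using contract_rk[OF assms, of "I \<union> B'" A] True unfolding A'_def B'_def by auto
    have rk_B: "rk (contract M A) B' = rk M (B' \<union> A') - rk M A'"
      using contract_rk[OF assms, of B' A] unfolding A'_def B'_def by auto
    have mono_A: "rk M A' \<le> rk M (B' \<union> A')" by (rule rk_mono[OF assms]) blast
    have mono_I: "rk M (B' \<union> A') \<le> rk M (I \<union> B' \<union> A')" by (rule rk_mono[OF assms]) blast
    have lhs: "indep (contract (contract M A) B) I \<longleftrightarrow>
        rk (contract M A) (I \<union> B') = card I + rk (contract M A) B'"
      using True unfolding B'_def by (simp add: indep_contract)
    have "(A \<union> B) \<inter> ground M = B' \<union> A'" unfolding A'_def B'_def by auto
    then have rhs: "indep (contract M (A \<union> B)) I \<longleftrightarrow>
        rk M (I \<union> B' \<union> A') = card I + rk M (B' \<union> A')"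
      using True by (auto simp: indep_contract Un_assoc)
    show ?thesis unfolding lhs rhs rk_IB rk_B using mono_A mono_I by arith
  qed
qed

lemma rk_delete_disjoint: "Y \<inter> D = {} \<Longrightarrow> rk (delete M D) Y = rk M Y"
  unfolding rk_def by (metis (no_types, lifting) disjoint_iff indep_delete subsetD)

lemma delete_contract_delete_elem:
  assumes "y \<in> D" "y \<notin> C"
  shows "delete (contract M C) D = delete (contract (delete M {y}) C) (D - {y})"
proof (rule matroid_eqI)
  show "ground (delete (contract M C) D) = ground (delete (contract (delete M {y}) C) (D - {y}))"
    using assms by auto
  fix I
  show "indep (delete (contract M C) D) I \<longleftrightarrow> indep (delete (contract (delete M {y}) C) (D - {y})) I"
  proof (cases "y \<in> I")
    case True
    then show ?thesis using assms by (auto simp: indep_contract)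
  next
    case False
    have "C \<inter> ground (delete M {y}) = C \<inter> ground M" using assms by auto
    moreover have "rk (delete M {y}) (I \<union> C \<inter> ground M) = rk M (I \<union> C \<inter> ground M)"
      "rk (delete M {y}) (C \<inter> ground M) = rk M (C \<inter> ground M)"
      using False assms by (auto intro: rk_delete_disjoint)
    ultimately show ?thesis using False assms by (auto simp: indep_contract)
  qed
qed

text \<open>Proper subsets of a circuit are independent, so a basis of \<open>A\<close> can be chosen to
  contain \<open>C \<inter> A\<close>; if \<open>C - A\<close> were independent in \<open>M / A\<close>, adding it to that basis would
  give an independent set containing \<open>C\<close>.\<close>

lemma circuit_diff_dependent_in_contract:
  assumes "matroid M" "circuit M C" "\<not> C \<subseteq> A"
  shows "\<not> indep (contract M A) (C - A)"
proof
  assume indep_CA: "indep (contract M A) (C - A)"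
  define A' where "A' = A \<inter> ground M"
  have C_ground: "C \<subseteq> ground M" using assms(2) unfolding circuit_def by simp
  have rank_eq: "rk M ((C - A) \<union> A') = card (C - A) + rk M A'"
    using indep_CA by (simp add: indep_contract A'_def)
  obtain e where e: "e \<in> C" "e \<notin> A" using assms(3) by blast
  have "indep M (C - {e})" using assms(2) e(1) unfolding circuit_def by blast
  moreover have "C \<inter> A' \<subseteq> C - {e}" using e(2) unfolding A'_def by blast
  ultimately have "indep M (C \<inter> A')" by (rule matroid_indep_subset[OF assms(1)])
  then obtain J where J: "C \<inter> A' \<subseteq> J" "J \<subseteq> A'" "indep M J" "card J = rk M A'"
    using indep_extend_to_rk[OF assms(1) _ Int_lower2] by blast
  obtain B where B: "B \<subseteq> (C - A) \<union> A'" "indep M B" "card B = rk M ((C - A) \<union> A')"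
    and "B \<inter> A' = J"
    using rk_basis_extend[OF assms(1) J(3,2,4)] by blast
  then have B_sub: "B \<subseteq> (C - A) \<union> J" using B(2) by blast
  have fin: "finite ((C - A) \<union> J)"
    using matroid_finite_ground[OF assms(1)] C_ground matroid_indep_finite[OF assms(1) J(3)]
    by (meson finite_Diff finite_UnI finite_subset)
  have "(C - A) \<inter> J = {}" using J(2) unfolding A'_def by blast
  then have "card ((C - A) \<union> J) = card B"
    using fin rank_eq B(3) J(4) by (simp add: card_Un_disjoint)
  then have "B = (C - A) \<union> J" using card_seteq[OF fin B_sub] by simp
  then have "C \<subseteq> B" using J(1) C_ground unfolding A'_def by blast
  then have "indep M C" by (rule matroid_indep_subset[OF assms(1) B(2)])
  then show False using assms(2) unfolding circuit_def by blast
qed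

lemma has_minor_of_is_minor: "is_minor M' K \<Longrightarrow> iso M' N \<Longrightarrow> has_minor K N"
  unfolding has_minor_def by blast

lemma is_minor_contract_elem:
  assumes "matroid M" "C \<subseteq> ground M - A" "D \<subseteq> ground M - A" "C \<inter> D = {}" "y \<in> C"
  shows "is_minor (delete (contract M (A \<union> C)) D) (contract (contract M A) {y})"
  unfolding is_minor_def
proof (intro exI conjI)
  have "A \<union> C = A \<union> {y} \<union> (C - {y})" using assms(5) by blast
  then show "delete (contract M (A \<union> C)) D = delete (contract (contract (contract M A) {y}) (C - {y})) D"
    by (simp add: contract_contract[OF assms(1)])
qed (use assms in auto)

lemma is_minor_delete_elem:
  assumes "matroid M" "C \<subseteq> ground M - A" "D \<subseteq> ground M - A" "C \<inter> D = {}" "y \<in> D"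
  shows "is_minor (delete (contract M (A \<union> C)) D) (delete (contract M A) {y})"
  unfolding is_minor_def
proof (intro exI conjI)
  have "y \<notin> C" using assms(4,5) by blast
  then show "delete (contract M (A \<union> C)) D = delete (contract (delete (contract M A) {y}) C) (D - {y})"
    using delete_contract_delete_elem[OF assms(5), of C "contract M A"]
    by (simp add: contract_contract[OF assms(1)])
qed (use assms in auto)

lemma has_minor_contract_avoiding:
  assumes "matroid M" "has_minor (contract M A) N"
    and "\<And>y. y \<in> Y \<Longrightarrow> \<not> has_minor (contract (contract M A) {y}) N"
    and "\<And>y. y \<in> Y \<Longrightarrow> \<not> has_minor (delete (contract M A) {y}) N"
  obtains C D where "C \<subseteq> ground M - A" "D \<subseteq> ground M - A" "C \<inter> Y = {}" "D \<inter> Y = {}"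
    "iso (delete (contract M (A \<union> C)) D) N"
proof -
  obtain C D where CD: "C \<subseteq> ground M - A" "D \<subseteq> ground M - A" "C \<inter> D = {}"
    and "iso (delete (contract (contract M A) C) D) N"
    using assms(2) unfolding has_minor_def is_minor_def by auto
  then have iso: "iso (delete (contract M (A \<union> C)) D) N"
    by (simp add: contract_contract[OF assms(1)])
  have "C \<inter> Y = {}"
    using is_minor_contract_elem[OF assms(1) CD] has_minor_of_is_minor[OF _ iso] assms(3) by blast
  moreover have "D \<inter> Y = {}"
    using is_minor_delete_elem[OF assms(1) CD] has_minor_of_is_minor[OF _ iso] assms(4) by blast
  ultimately show ?thesis using that CD(1,2) iso by blast
qed

lemma dependent_pair_two_separation:
  assumes "matroid N" "u \<in> ground N" "v \<in> ground N" "u \<noteq> v" "\<not> indep N {u, v}"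
    and "4 \<le> card (ground N)"
  shows "j_separation N 2 {u, v}"
proof -
  obtain I where I: "I \<subseteq> {u, v}" "indep N I" "card I = rk N {u, v}"
    using matroid_rk_attained[OF assms(1)] .
  have "I \<noteq> {u, v}" using I(2) assms(5) by blast
  then have "card I < card {u, v}" using I(1) by (intro psubset_card_mono) auto
  then have "rk N {u, v} \<le> 1" using I(3) assms(4) by simp
  moreover have "rk N (ground N - {u, v}) \<le> rk N (ground N)" by (intro rk_mono[OF assms(1)]) blast
  moreover have "card (ground N - {u, v}) = card (ground N) - 2"
    using assms(2-4) matroid_finite_ground[OF assms(1)] by (simp add: card_Diff_subset)
  ultimately show ?thesis unfolding j_separation_def using assms by auto
qed

lemma iso_three_connected_indep_pair:
  assumes "iso M' N" "matroid N" "three_connected N" "4 \<le> card (ground N)"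
    and "u \<in> ground M'" "v \<in> ground M'" "u \<noteq> v"
  shows "indep M' {u, v}"
proof -
  obtain f where f: "bij_betw f (ground M') (ground N)"
    and indep_iff: "\<forall>X \<subseteq> ground M'. indep M' X \<longleftrightarrow> indep N (f ` X)"
    using assms(1) unfolding iso_def by blast
  have "f u \<in> ground N" "f v \<in> ground N" "f u \<noteq> f v"
    using f assms(5-7) unfolding bij_betw_def inj_on_def by auto
  moreover have "\<not> j_separation N 2 {f u, f v}"
    using assms(3) unfolding three_connected_def by simp
  ultimately have "indep N {f u, f v}"
    using dependent_pair_two_separation[OF assms(2) _ _ _ _ assms(4)] by blast
  then show ?thesis using indep_iff assms(5,6) by simp
qed

theorem lemma3p1:
  fixes M :: "'a matroid" and N :: "'b matroid"
  assumes "matroid M" and "three_connected M"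
    and "matroid N" and "three_connected N"
    and "has_minor M N" and "card (ground N) \<ge> 4"
    and "N_grounded M N T" and "x \<in> T"
  shows "\<not> has_minor (contract M {x}) N"
proof
  assume minor: "has_minor (contract M {x}) N"
  have T: "circuit M T" "card T = 3" "T \<subseteq> ground M"
    using assms(7) unfolding N_grounded_def triangle_def circuit_def by auto
  then have "card (T - {x}) = 2" using assms(8) by (simp add: card_ge_0_finite)
  then obtain a b where ab: "T - {x} = {a, b}" "a \<noteq> b" unfolding card_2_iff by blast
  have grounded: "\<not> has_minor (contract (contract M {x}) {y}) N"
      "\<not> has_minor (delete (contract M {x}) {y}) N" if "y \<in> T - {x}" for y
    using assms(7,8) that unfolding N_grounded_def by auto
  obtain C D where CD: "C \<subseteq> ground M - {x}" "D \<subseteq> ground M - {x}"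
      "C \<inter> (T - {x}) = {}" "D \<inter> (T - {x}) = {}"
    and iso: "iso (delete (contract M ({x} \<union> C)) D) N"
    using has_minor_contract_avoiding[OF assms(1) minor grounded] by blast
  have "T - ({x} \<union> C) = {a, b}" using ab CD(3) by blast
  then have dependent: "\<not> indep (contract M ({x} \<union> C)) {a, b}"
    using circuit_diff_dependent_in_contract[OF assms(1) T(1), of "{x} \<union> C"] ab by auto
  have "a \<in> ground (delete (contract M ({x} \<union> C)) D)"
      "b \<in> ground (delete (contract M ({x} \<union> C)) D)"
    using ab CD(3,4) T(3) by auto
  then have "indep (delete (contract M ({x} \<union> C)) D) {a, b}"
    by (rule iso_three_connected_indep_pair[OF iso assms(3,4,6) _ _ ab(2)])
  with dependent show False by simp
qed

end
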